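(* For any hypothesis class $\mathcal{H}\subseteq\{0,1\}^{\mathcal{X}}$ and time horizon $T$, $$\inf_{\mathcal{A}}\operatorname{M}_{\mathcal{A}}(T,\mathcal{H}) \le \inf_{w\in\mathbb{N}}\Bigl\{\operatorname{AL}_w(\mathcal{H}) + 2\sqrt{(w-1)T}\Bigr\},$$ where the infimum on the left is over all (possibly randomized) online learners operating under apple tasting feedback.
   Context: Online binary classification: over rounds $t=1,\dots,T$, an adversary picks $(x_t,y_t)\in\mathcal{X}\times\{0,1\}$ and reveals $x_t$; the learner $\mathcal{A}$ (possibly randomized) outputs $\hat y_t=\mathcal{A}(x_t)\in\{0,1\}$ based on the history; under apple tasting feedback the learner observes $y_t$ only if $\hat y_t=1$. $\operatorname{M}_{\mathcal{A}}(T,\mathcal{H}) := \sup_{h\in\mathcal{H}}\sup_{x_1,\dots,x_T}\mathbb{E}\bigl[\sum_{t=1}^T \mathbb{1}\{\mathcal{A}(x_t)\neq h(x_t)\}\bigr]$ (labels $y_t=h(x_t)$, expectation over the learner's randomness). AL tree of width $w\in\mathbb{N}=\{1,2,\dots\}$ and depth $d$: a binary string $u$ is an internal node if $|u|<d$ and $u$ has fewer than $w$ ones; the tree assigns $x_u\in\mathcal{X}$ to each internal node. A path is a binary string $\sigma$ whose proper prefixes are all internal nodes but which is not itself one. The tree is shattered by $\mathcal{H}$ if for every path $\sigma$ some $h\in\mathcal{H}$ satisfies $h(x_{(\sigma_1,\dots,\sigma_{i-1})})=\sigma_i$ for all $i\le|\sigma|$. $\operatorname{AL}_w(\mathcal{H})$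 is the largest $d$ such that such a tree of width $w$ and depth $d$ is shattered ($\infty$ if unbounded, $0$ if none). *)

theory Defs
  imports "HOL-Analysis.Analysis"
begin

text \<open>Labels in {0,1} are encoded as bool (True = 1).
  A history entry of a round is (x_t, yhat_t, observed label), where the observed
  label is Some y_t if yhat_t = 1 and None otherwise (apple tasting feedback).
  A (possibly randomized) learner maps the visible history and the current instance
  to the probability of predicting 1.\<close>

type_synonym 'x hist = "('x \<times> bool \<times> bool option) list"
type_synonym 'x learner = "'x hist \<Rightarrow> 'x \<Rightarrow> real"

definition learners :: "'x learner set" where
  "learners = {L. \<forall>hs x. 0 \<le> L hs x \<and> L hs x \<le> 1}"

fun exp_mistakes :: "'x learner \<Rightarrow> ('x \<Rightarrow> bool) \<Rightarrow> 'x hist \<Rightarrow> 'x list \<Rightarrow> real" where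
  "exp_mistakes L h hs [] = 0"
| "exp_mistakes L h hs (x # xs) =
     L hs x * ((if h x then 0 else 1) + exp_mistakes L h (hs @ [(x, True, Some (h x))]) xs)
   + (1 - L hs x) * ((if h x then 1 else 0) + exp_mistakes L h (hs @ [(x, False, None)]) xs)"

definition M :: "'x learner \<Rightarrow> nat \<Rightarrow> ('x \<Rightarrow> bool) set \<Rightarrow> ennreal" where
  "M L T H = (SUP p \<in> {(h, xs). h \<in> H \<and> length xs = T}. ennreal (exp_mistakes L (fst p) [] (snd p)))"

definition internal :: "nat \<Rightarrow> nat \<Rightarrow> bool list \<Rightarrow> bool" where
  "internal w d u \<longleftrightarrow> length u < d \<and> length (filter id u) < w"

definition is_path :: "nat \<Rightarrow> nat \<Rightarrow> bool list \<Rightarrow> bool" where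
  "is_path w d \<sigma> \<longleftrightarrow> (\<forall>k < length \<sigma>. internal w d (take k \<sigma>)) \<and> \<not> internal w d \<sigma>"

definition AL_shattered :: "('x \<Rightarrow> bool) set \<Rightarrow> nat \<Rightarrow> nat \<Rightarrow> (bool list \<Rightarrow> 'x) \<Rightarrow> bool" where
  "AL_shattered H w d tr \<longleftrightarrow>
     (\<forall>\<sigma>. is_path w d \<sigma> \<longrightarrow> (\<exists>h\<in>H. \<forall>i < length \<sigma>. h (tr (take i \<sigma>)) = \<sigma> ! i))"

definition AL :: "nat \<Rightarrow> ('x \<Rightarrow> bool) set \<Rightarrow> enat" where
  "AL w H = Sup {enat d | d. \<exists>tr. AL_shattered H w d tr}"

end

theory Submission
  imports Defs
begin

text \<open>The learner keeps the version space \<open>V\<close> of hypotheses consistent with the revealed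
  labels and the potential \<open>\<Phi>(V) = min\<^sub>j (AL\<^sub>j(V) + (j - 1) c)\<close> over the widths
  \<open>j \<le> w\<close> with finite dimension. On \<open>x\<close>, split \<open>V\<close> into \<open>V\<^sub>0\<close>, \<open>V\<^sub>1\<close> by the label of \<open>x\<close> and let
  \<open>j\<close> be a minimising width. If \<open>V\<^sub>0 = {}\<close> or \<open>AL\<^sub>j(V\<^sub>0) < AL\<^sub>j(V)\<close>, predict 1: a mistake
  reveals the label 0 and costs one unit of potential. Otherwise predict 1 with probability
  \<open>p\<close>. Then \<open>AL\<^sub>j\<^sub>-\<^sub>1(V\<^sub>1) < AL\<^sub>j(V)\<close>, for else trees witnessing \<open>AL\<^sub>j(V\<^sub>0)\<close> and \<open>AL\<^sub>j\<^sub>-\<^sub>1(V\<^sub>1)\<close>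
  hung below \<open>x\<close> would shatter a deeper tree of width \<open>j\<close>; so a revealed label 1 lowers
  \<open>\<Phi>\<close> by \<open>c\<close>. With \<open>p c \<ge> 1 - 2 p\<close> every round costs at most \<open>p\<close> beyond the drop of
  \<open>\<Phi>\<close>, whence at most \<open>AL\<^sub>w(H) + (w - 1) c + p T\<close> mistakes; \<open>p = \<surd>((w - 1)/T)\<close>
  and \<open>c = 1/p\<close> give the bound.\<close>

lemma AL_shattered_mono:
  "V \<subseteq> W \<Longrightarrow> AL_shattered V w d tr \<Longrightarrow> AL_shattered W w d tr"
  unfolding AL_shattered_def by blast

lemma AL_mono: "V \<subseteq> W \<Longrightarrow> AL w V \<le> AL w W"
  unfolding AL_def by (rule Sup_subset_mono) (auto dest: AL_shattered_mono)

lemma AL_shattered_imp_le_AL: "AL_shattered V w d tr \<Longrightarrow> enat d \<le> AL w V"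
  unfolding AL_def by (rule Sup_upper) auto

lemma length_filter_take_le: "length (filter P (take k xs)) \<le> length (filter P xs)"
  by (metis append_take_drop_id filter_append le_add1 length_append)

lemma is_path_Nil_if_degenerate: "is_path w d \<sigma> \<Longrightarrow> w = 0 \<or> d = 0 \<Longrightarrow> \<sigma> = []"
  unfolding is_path_def internal_def by (cases \<sigma>) auto

lemma AL_shattered_degenerate: "V \<noteq> {} \<Longrightarrow> w = 0 \<or> d = 0 \<Longrightarrow> AL_shattered V w d tr"
  unfolding AL_shattered_def by (auto dest!: is_path_Nil_if_degenerate)

lemma AL_width_0: "V \<noteq> {} \<Longrightarrow> AL 0 V = \<infinity>"
proof -
  assume "V \<noteq> {}"
  then have "enat d \<le> AL 0 V" for d
    by (simp add: AL_shattered_degenerate AL_shattered_imp_le_AL)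
  then show "AL 0 V = \<infinity>"
    by (metis enat_ord_simps(2) lessI not_infinity_eq not_less)
qed

lemma is_path_length_le: "is_path w d \<sigma> \<Longrightarrow> length \<sigma> \<le> d"
  unfolding is_path_def internal_def
  by (cases \<sigma> rule: rev_cases) (auto dest: spec[of _ "length \<sigma> - 1"])

lemma is_path_pad:
  assumes path: "is_path w d' \<sigma>" and "d' \<le> d"
  shows "\<exists>\<rho>. is_path w d (\<sigma> @ \<rho>)"
proof (cases "length (filter id \<sigma>) < w")
  case True
  then have "length \<sigma> = d'"
    using path is_path_length_le[OF path] unfolding is_path_def internal_def by simp
  then have "is_path w d (\<sigma> @ replicate (d - d') False)"
    using True \<open>d' \<le> d\<close> unfolding is_path_def internal_def
    by (auto simp: take_append) (meson le_less_trans length_filter_take_le)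
  then show ?thesis ..
next
  case False
  then have "is_path w d \<sigma>"
    using path is_path_length_le[OF path] \<open>d' \<le> d\<close> unfolding is_path_def internal_def by auto
  then show ?thesis by (metis append_Nil2)
qed

lemma AL_shattered_le_depth:
  assumes shattered: "AL_shattered V w d tr" and "d' \<le> d"
  shows "AL_shattered V w d' tr"
  unfolding AL_shattered_def
proof (intro allI impI)
  fix \<sigma> assume "is_path w d' \<sigma>"
  then obtain \<rho> where "is_path w d (\<sigma> @ \<rho>)"
    using is_path_pad \<open>d' \<le> d\<close> by blast
  then obtain h where "h \<in> V"
    and h: "\<forall>i < length (\<sigma> @ \<rho>). h (tr (take i (\<sigma> @ \<rho>))) = (\<sigma> @ \<rho>) ! i"
    using shattered unfolding AL_shattered_def by blast
  have "\<forall>i < length \<sigma>. h (tr (take i \<sigma>)) = \<sigma> ! i"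
  proof (intro allI impI)
    fix i assume "i < length \<sigma>"
    then show "h (tr (take i \<sigma>)) = \<sigma> ! i"
      using h[rule_format, of i] by (simp add: nth_append)
  qed
  with \<open>h \<in> V\<close> show "\<exists>h\<in>V. \<forall>i < length \<sigma>. h (tr (take i \<sigma>)) = \<sigma> ! i" by blast
qed

lemma AL_shattered_if_le_AL:
  assumes "V \<noteq> {}" and "enat e \<le> AL w V"
  shows "\<exists>tr. AL_shattered V w e tr"
proof (cases e)
  case 0
  then show ?thesis using AL_shattered_degenerate[OF \<open>V \<noteq> {}\<close>] by blast
next
  case (Suc e')
  then have "enat e' < AL w V" using \<open>enat e \<le> AL w V\<close> by (simp add: Suc_ile_eq)
  then obtain d tr where "AL_shattered V w d tr" "e' < d"
    unfolding AL_def less_Sup_iff by auto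
  then show ?thesis using Suc AL_shattered_le_depth by (metis Suc_leI)
qed

definition AL_node :: "'x \<Rightarrow> (bool list \<Rightarrow> 'x) \<Rightarrow> (bool list \<Rightarrow> 'x) \<Rightarrow> bool list \<Rightarrow> 'x" where
  "AL_node x t0 t1 u = (case u of [] \<Rightarrow> x | b # u' \<Rightarrow> if b then t1 u' else t0 u')"

lemma is_path_Cons:
  assumes "1 \<le> j"
  shows "is_path j (Suc e) (b # \<tau>) \<longleftrightarrow> is_path (if b then j - 1 else j) e \<tau>"
proof -
  have "internal j (Suc e) (b # u) \<longleftrightarrow> internal (if b then j - 1 else j) e u" for u
    unfolding internal_def using assms by auto
  moreover have "internal j (Suc e) []"
    unfolding internal_def using assms by simp
  ultimately show ?thesis
    unfolding is_path_def by (auto simp: less_Suc_eq_0_disj take_Cons')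
qed

lemma AL_shattered_node:
  assumes "1 \<le> j"
    and "AL_shattered {h \<in> V. \<not> h x} j e t0"
    and "AL_shattered {h \<in> V. h x} (j - 1) e t1"
  shows "AL_shattered V j (Suc e) (AL_node x t0 t1)"
  unfolding AL_shattered_def
proof (intro allI impI)
  fix \<sigma> assume path: "is_path j (Suc e) \<sigma>"
  then obtain b \<tau> where \<sigma>: "\<sigma> = b # \<tau>"
    using \<open>1 \<le> j\<close> unfolding is_path_def internal_def by (cases \<sigma>) auto
  have side: "AL_shattered {h \<in> V. h x = b} (if b then j - 1 else j) e (if b then t1 else t0)"
    using assms(2,3) by (cases b) simp_all
  have "is_path (if b then j - 1 else j) e \<tau>"
    using path is_path_Cons[OF \<open>1 \<le> j\<close>] \<sigma> by simp
  then obtain h where "h \<in> V" "h x = b"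
    and h: "\<forall>i < length \<tau>. h ((if b then t1 else t0) (take i \<tau>)) = \<tau> ! i"
    using side unfolding AL_shattered_def by auto
  have "h (AL_node x t0 t1 (take i \<sigma>)) = \<sigma> ! i" if "i < length \<sigma>" for i
  proof (cases i)
    case 0
    then show ?thesis using \<open>h x = b\<close> \<sigma> by (simp add: AL_node_def)
  next
    case (Suc i')
    then show ?thesis using that h \<sigma> by (cases b) (simp_all add: AL_node_def)
  qed
  with \<open>h \<in> V\<close> show "\<exists>h\<in>V. \<forall>i < length \<sigma>. h (AL_node x t0 t1 (take i \<sigma>)) = \<sigma> ! i"
    by blast
qed

lemma AL_positive_side_drops:
  assumes "1 \<le> j" and "AL j V = enat e"
    and "{h \<in> V. \<not> h x} \<noteq> {}" and "enat e \<le> AL j {h \<in> V. \<not> h x}"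
    and "{h \<in> V. h x} \<noteq> {}"
  shows "AL (j - 1) {h \<in> V. h x} < enat e"
proof (rule ccontr)
  assume "\<not> ?thesis"
  then obtain t1 where t1: "AL_shattered {h \<in> V. h x} (j - 1) e t1"
    using AL_shattered_if_le_AL[OF assms(5)] by (meson not_less)
  obtain t0 where t0: "AL_shattered {h \<in> V. \<not> h x} j e t0"
    using AL_shattered_if_le_AL[OF assms(3,4)] by blast
  have "enat (Suc e) \<le> AL j V"
    using AL_shattered_imp_le_AL[OF AL_shattered_node[OF \<open>1 \<le> j\<close> t0 t1]] .
  then show False using \<open>AL j V = enat e\<close> by simp
qed

definition version_space :: "('x \<Rightarrow> bool) set \<Rightarrow> 'x hist \<Rightarrow> ('x \<Rightarrow> bool) set" where
  "version_space H hs = {g \<in> H. \<forall>(x, b, y) \<in> set hs. \<forall>v. y = Some v \<longrightarrow> g x = v}"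

lemma version_space_subset: "version_space H hs \<subseteq> H"
  unfolding version_space_def by blast

lemma version_space_Nil [simp]: "version_space H [] = H"
  unfolding version_space_def by simp

lemma version_space_snoc_Some [simp]:
  "version_space H (hs @ [(x, b, Some v)]) = {g \<in> version_space H hs. g x = v}"
  unfolding version_space_def by auto

lemma version_space_snoc_None [simp]:
  "version_space H (hs @ [(x, b, None)]) = version_space H hs"
  unfolding version_space_def by auto

locale apple_tasting_potential =
  fixes H :: "('x \<Rightarrow> bool) set" and w :: nat and p c :: real
  assumes width_pos: "1 \<le> w" and AL_finite: "AL w H \<noteq> \<infinity>"
    and p_nonneg: "0 \<le> p" and p_le_1: "p \<le> 1" and c_nonneg: "0 \<le> c"
    and exploration: "2 \<le> w \<Longrightarrow> 1 - 2 * p \<le> p * c"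
begin

definition finite_widths :: "('x \<Rightarrow> bool) set \<Rightarrow> nat set" where
  "finite_widths V = {j \<in> {1..w}. AL j V \<noteq> \<infinity>}"

definition width_cost :: "('x \<Rightarrow> bool) set \<Rightarrow> nat \<Rightarrow> real" where
  "width_cost V j = real (the_enat (AL j V)) + real (j - 1) * c"

definition best_width :: "('x \<Rightarrow> bool) set \<Rightarrow> nat" where
  "best_width V = arg_min_on (width_cost V) (finite_widths V)"

definition potential :: "('x \<Rightarrow> bool) set \<Rightarrow> real" where
  "potential V = width_cost V (best_width V)"

lemma width_in_finite_widths: "V \<subseteq> H \<Longrightarrow> w \<in> finite_widths V"
  using AL_mono[of V H w] AL_finite width_pos unfolding finite_widths_def
  by (cases "AL w V"; cases "AL w H") auto

lemma best_width_in_finite_widths: "V \<subseteq> H \<Longrightarrow> best_width V \<in> finite_widths V"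
  unfolding best_width_def
  using arg_min_if_finite(1)[of "finite_widths V" "width_cost V"] width_in_finite_widths[of V]
  by (auto simp: finite_widths_def)

lemma potential_le_width_cost:
  "V \<subseteq> H \<Longrightarrow> j \<in> finite_widths V \<Longrightarrow> potential V \<le> width_cost V j"
  unfolding potential_def best_width_def
  by (rule arg_min_least) (auto simp: finite_widths_def)

lemma potential_le:
  assumes "V \<subseteq> H" "1 \<le> j" "j \<le> w" "AL j V \<le> enat n"
  shows "potential V \<le> real n + real (j - 1) * c"
proof -
  have "AL j V \<noteq> \<infinity>" "the_enat (AL j V) \<le> n"
    using assms(4) by (cases "AL j V"; simp)+
  then show ?thesis
    using potential_le_width_cost[OF assms(1), of j] assms(2,3)
    unfolding finite_widths_def width_cost_def by simp
qed

lemma potential_eq: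
  assumes "V \<subseteq> H"
  obtains n where "1 \<le> best_width V" "best_width V \<le> w" "AL (best_width V) V = enat n"
    and "potential V = real n + real (best_width V - 1) * c"
  using best_width_in_finite_widths[OF assms]
  unfolding potential_def width_cost_def finite_widths_def by auto

lemma potential_nonneg: "V \<subseteq> H \<Longrightarrow> 0 \<le> potential V"
  using c_nonneg by (auto elim: potential_eq)

lemma potential_mono:
  assumes "V' \<subseteq> V" "V \<subseteq> H"
  shows "potential V' \<le> potential V"
proof -
  obtain n where j: "1 \<le> best_width V" "best_width V \<le> w" "AL (best_width V) V = enat n"
    and "potential V = real n + real (best_width V - 1) * c"
    using potential_eq[OF assms(2)] .
  moreover have "potential V' \<le> real n + real (best_width V - 1) * c"
    using assms AL_mono[OF assms(1), of "best_width V"] j by (intro potential_le) auto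
  ultimately show ?thesis by simp
qed

lemma potential_decrease_same_width:
  assumes "V' \<subseteq> V" "V \<subseteq> H" "AL (best_width V) V' < AL (best_width V) V"
  shows "potential V' \<le> potential V - 1"
proof -
  obtain n where j: "1 \<le> best_width V" "best_width V \<le> w" "AL (best_width V) V = enat n"
    and "potential V = real n + real (best_width V - 1) * c"
    using potential_eq[OF assms(2)] .
  moreover have "1 \<le> n" "AL (best_width V) V' \<le> enat (n - 1)"
    using assms(3) j(3) by (cases "AL (best_width V) V'"; simp)+
  moreover from calculation have "potential V' \<le> real (n - 1) + real (best_width V - 1) * c"
    using assms by (intro potential_le) auto
  ultimately show ?thesis by (simp add: of_nat_diff)
qed

lemma potential_decrease_lower_width:
  assumes "V' \<subseteq> V" "V \<subseteq> H" "2 \<le> best_width V"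
    and "AL (best_width V - 1) V' < AL (best_width V) V"
  shows "potential V' \<le> potential V - c"
proof -
  obtain n where j: "1 \<le> best_width V" "best_width V \<le> w" "AL (best_width V) V = enat n"
    and "potential V = real n + real (best_width V - 1) * c"
    using potential_eq[OF assms(2)] .
  moreover have "1 \<le> n" "AL (best_width V - 1) V' \<le> enat (n - 1)"
    using assms(4) j(3) by (cases "AL (best_width V - 1) V'"; simp)+
  moreover from calculation have "potential V' \<le> real (n - 1) + real (best_width V - 1 - 1) * c"
    using assms by (intro potential_le) auto
  ultimately show ?thesis using assms(3) c_nonneg by (simp add: of_nat_diff algebra_simps)
qed

lemma potential_decrease_positive_side:
  assumes "V \<subseteq> H" "{h \<in> V. \<not> h x} \<noteq> {}" "{h \<in> V. h x} \<noteq> {}"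
    and "\<not> AL (best_width V) {h \<in> V. \<not> h x} < AL (best_width V) V"
  shows "2 \<le> best_width V" and "potential {h \<in> V. h x} \<le> potential V - c"
proof -
  let ?j = "best_width V"
  obtain n where "1 \<le> ?j" "AL ?j V = enat n"
    using potential_eq[OF assms(1)] by metis
  moreover have "enat n \<le> AL ?j {h \<in> V. \<not> h x}"
    using assms(4) calculation(2) by (simp add: not_less)
  ultimately have drop: "AL (?j - 1) {h \<in> V. h x} < AL ?j V"
    using AL_positive_side_drops[of ?j V n x] assms(2,3) by simp
  show "2 \<le> ?j"
  proof (rule ccontr)
    assume "\<not> 2 \<le> ?j"
    then have "?j - 1 = 0" by simp
    then show False using drop AL_width_0[OF assms(3)] by simp
  qed
  then show "potential {h \<in> V. h x} \<le> potential V - c"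
    using potential_decrease_lower_width[OF _ assms(1) _ drop] by auto
qed

definition predict :: "('x \<Rightarrow> bool) set \<Rightarrow> 'x \<Rightarrow> real" where
  "predict V x =
     (let V0 = {h \<in> V. \<not> h x}; j = best_width V in
      if V0 = {} \<or> AL j V0 < AL j V then 1 else p)"

definition learner :: "'x learner" where
  "learner hs x = predict (version_space H hs) x"

lemma learner_in_learners: "learner \<in> learners"
  unfolding learners_def learner_def predict_def Let_def using p_nonneg p_le_1 by auto

lemma round_cost_le:
  assumes "V \<subseteq> H" "h \<in> V"
    and after_1: "A \<le> potential {g \<in> V. g x = h x} + r"
    and after_0: "B \<le> potential V + r"
  shows "predict V x * ((if h x then 0 else 1) + A)
           + (1 - predict V x) * ((if h x then 1 else 0) + B) \<le> potential V + r + p"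
proof -
  define V0 V1 j where "V0 = {h \<in> V. \<not> h x}" and "V1 = {h \<in> V. h x}" and "j = best_width V"
  have "V0 \<subseteq> V" "V1 \<subseteq> V" unfolding V0_def V1_def by auto
  show ?thesis
  proof (cases "V0 = {} \<or> AL j V0 < AL j V")
    case certain: True
    have "(if h x then 0 else 1) + A \<le> potential V + r"
    proof (cases "h x")
      case True
      then show ?thesis
        using after_1 potential_mono[OF \<open>V1 \<subseteq> V\<close> assms(1)] by (simp add: V1_def)
    next
      case False
      then have "AL j V0 < AL j V" using certain \<open>h \<in> V\<close> by (auto simp: V0_def)
      then show ?thesis
        using False after_1 potential_decrease_same_width[OF \<open>V0 \<subseteq> V\<close> assms(1)]
        by (simp add: V0_def j_def)
    qed
    moreover have "predict V x = 1" using certain by (simp add: predict_def V0_def j_def)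
    ultimately show ?thesis using p_nonneg by simp
  next
    case random: False
    then have predict: "predict V x = p"
      unfolding predict_def Let_def V0_def[symmetric] j_def[symmetric] by simp
    show ?thesis
    proof (cases "h x")
      case True
      then have "V1 \<noteq> {}" using \<open>h \<in> V\<close> by (auto simp: V1_def)
      then have "2 \<le> j" and "potential V1 \<le> potential V - c"
        using potential_decrease_positive_side[OF assms(1)] random
        unfolding V0_def V1_def j_def by auto
      moreover have "j \<le> w"
        using potential_eq[OF assms(1)] unfolding j_def by metis
      ultimately have "1 - 2 * p \<le> p * c" and "A \<le> potential V - c + r"
        using exploration after_1 True by (auto simp: V1_def)
      then have "p * A + (1 - p) * (1 + B) \<le> p * (potential V - c + r) + (1 - p) * (1 + (potential V + r))"
        using after_0 p_nonneg p_le_1 by (intro add_mono mult_left_mono) auto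
      also have "\<dots> \<le> potential V + r + p"
        using \<open>1 - 2 * p \<le> p * c\<close> by (simp add: algebra_simps)
      finally show ?thesis using predict True by simp
    next
      case False
      then have "A \<le> potential V + r"
        using after_1 potential_mono[OF \<open>V0 \<subseteq> V\<close> assms(1)] by (simp add: V0_def)
      then have "p * (1 + A) + (1 - p) * B \<le> p * (1 + (potential V + r)) + (1 - p) * (potential V + r)"
        using after_0 p_nonneg p_le_1 by (intro add_mono mult_left_mono) auto
      also have "\<dots> = potential V + r + p" by (simp add: algebra_simps)
      finally show ?thesis using predict False by simp
    qed
  qed
qed

lemma exp_mistakes_learner_le:
  "h \<in> version_space H hs \<Longrightarrow>
     exp_mistakes learner h hs xs \<le> potential (version_space H hs) + p * length xs"
proof (induction xs arbitrary: hs)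
  case Nil
  then show ?case using potential_nonneg[OF version_space_subset] by simp
next
  case (Cons x xs)
  let ?V = "version_space H hs"
  have "exp_mistakes learner h (hs @ [(x, True, Some (h x))]) xs
          \<le> potential {g \<in> ?V. g x = h x} + p * length xs"
    using Cons.IH[of "hs @ [(x, True, Some (h x))]"] Cons.prems by simp
  moreover have "exp_mistakes learner h (hs @ [(x, False, None)]) xs \<le> potential ?V + p * length xs"
    using Cons.IH[of "hs @ [(x, False, None)]"] Cons.prems by simp
  ultimately have "exp_mistakes learner h hs (x # xs) \<le> potential ?V + p * length xs + p"
    using round_cost_le[OF version_space_subset Cons.prems] by (simp add: learner_def)
  then show ?case by (simp add: algebra_simps)
qed

lemma M_learner_le: "M learner T H \<le> ennreal (real (the_enat (AL w H)) + real (w - 1) * c + p * T)"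
  unfolding M_def
proof (rule SUP_least)
  fix q :: "('x \<Rightarrow> bool) \<times> 'x list" assume "q \<in> {(h, xs). h \<in> H \<and> length xs = T}"
  then obtain h xs where q: "q = (h, xs)" "h \<in> H" "length xs = T" by auto
  then have "exp_mistakes learner h [] xs \<le> potential H + p * T"
    using exp_mistakes_learner_le[of h "[]" xs] by simp
  also have "\<dots> \<le> real (the_enat (AL w H)) + real (w - 1) * c + p * T"
    using potential_le[of H w] width_pos AL_finite by (cases "AL w H") auto
  finally show "ennreal (exp_mistakes learner (fst q) [] (snd q))
      \<le> ennreal (real (the_enat (AL w H)) + real (w - 1) * c + p * T)"
    using q by (simp add: ennreal_leI)
qed

end

lemma mult_sqrt_div_eq:
  fixes k T :: real
  assumes "0 \<le> k"
  shows "k * sqrt (T / k) = sqrt (k * T)"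
proof (cases "k = 0")
  case False
  have "sqrt (k * T) = sqrt (k * k * (T / k))" using False by simp
  also have "\<dots> = k * sqrt (T / k)" using assms by (simp only: real_sqrt_mult) simp
  finally show ?thesis ..
qed simp

lemma exploration_parameters:
  fixes k T :: real
  assumes "0 \<le> k" "0 \<le> T"
  obtains p c where "0 \<le> p" "p \<le> 1" "0 \<le> c" "0 < k \<Longrightarrow> 1 - 2 * p \<le> p * c"
    and "k * c + p * T \<le> 2 * sqrt (k * T)"
proof (cases "T \<le> k")
  case True
  have "T = sqrt (T * T)" using assms(2) by simp
  also have "\<dots> \<le> sqrt (k * T)" using True assms(2) by (intro real_sqrt_le_mono mult_right_mono)
  finally show ?thesis using that[of 1 0] assms by simp
next
  case False
  \<comment> \<open>for \<open>k = 0\<close> this gives \<open>p = c = 0\<close>, using \<open>T / 0 = 0\<close>\<close>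
  let ?p = "sqrt (k / T)" and ?c = "sqrt (T / k)"
  have "?p \<le> 1" using False assms by (simp add: real_sqrt_le_1_iff)
  moreover have "0 < k \<Longrightarrow> ?p * ?c = 1" using False by (simp add: real_sqrt_mult[symmetric])
  moreover have "k * ?c = sqrt (k * T)" "?p * T = sqrt (k * T)"
    using mult_sqrt_div_eq[OF assms(1)] mult_sqrt_div_eq[OF assms(2)] by (simp_all add: mult.commute)
  ultimately show ?thesis using that[of ?p ?c] assms by simp
qed

theorem lemma2:
  fixes H :: "('x \<Rightarrow> bool) set" and T :: nat
  shows "(INF L \<in> learners. M L T H)
     \<le> (INF w \<in> {1..}. ennreal_of_enat (AL w H) + ennreal (2 * sqrt (real (w - 1) * real T)))"
proof (rule INF_greatest)
  fix w :: nat assume "w \<in> {1..}"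
  show "(INF L \<in> learners. M L T H)
      \<le> ennreal_of_enat (AL w H) + ennreal (2 * sqrt (real (w - 1) * real T))"
  proof (cases "AL w H")
    case (enat d)
    obtain p c where "0 \<le> p" "p \<le> 1" "0 \<le> c" "0 < real (w - 1) \<Longrightarrow> 1 - 2 * p \<le> p * c"
      and bound: "real (w - 1) * c + p * T \<le> 2 * sqrt (real (w - 1) * T)"
      using exploration_parameters[of "real (w - 1)" "real T"] by auto
    then interpret apple_tasting_potential H w p c
      using \<open>w \<in> {1..}\<close> enat by unfold_locales auto
    have "(INF L \<in> learners. M L T H) \<le> M learner T H"
      by (rule INF_lower[OF learner_in_learners])
    also have "\<dots> \<le> ennreal (d + (real (w - 1) * c + p * T))"
      using M_learner_le enat by (simp add: add.assoc)
    also have "\<dots> \<le> ennreal (d + 2 * sqrt (real (w - 1) * T))"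
      using bound by (intro ennreal_leI) simp
    finally show ?thesis
      using enat by (simp add: ennreal_plus ennreal_of_nat_eq_real_of_nat)
  qed simp
qed

end
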